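(* Let $n\in\mathbb{N}_0$. For $0\le k\le n/2$, the polynomial $r_{n,2k}:=2\sum_{0\le j\le n/2}M^{(n)}_{2j,2k}b_{n,2j}+b_{n,2k}$ is totally symmetric, and for $0\le k\le (n-1)/2$ the polynomial $r_{n,2k+1}:=-2\sum_{0\le j\le (n-1)/2}M^{(n)}_{2j+1,2k+1}b_{n,2j+1}+b_{n,2k+1}$ satisfies $Mr_{n,2k+1}=-r_{n,2k+1}=Rr_{n,2k+1}$.
   Context: $\widehat T$ is the triangle with vertices $(0,0),(1,0),(0,1)$. $P_m^{(\alpha,\beta)}$ are the Jacobi polynomials with $P_m^{(\alpha,\beta)}(1)=(\alpha+1)_m/m!$; $P_k^{(0,0)}$ are the Legendre polynomials. For $0\le k\le n$, $b_{n,k}(x_1,x_2):=(x_1+x_2)^kP^{(0,2k+1)}_{n-k}(2(x_1+x_2)-1)P^{(0,0)}_k\!\left(\frac{x_1-x_2}{x_1+x_2}\right)$; these form a basis of the space $\mathbb{P}^\perp_{n,n-1}(\widehat T)$ of polynomials of degree $\le n$ that are $L^2(\widehat T)$-orthogonal to all polynomials of degree $\le n-1$. Define $Mp(x_1,x_2):=p(1-x_1-x_2,x_2)$ and $Rp(x_1,x_2):=p(x_2,x_1)$, and let $M^{(n)}_{j,k}$ be the matrix entries of $M$ in this basis: $Mb_{n,k}=\sum_{j=0}^n b_{n,j}M^{(n)}_{j,k}$. A function $u$ on $\widehat T$ is totally symmetric if $u\circ\chi=u$ for every affine bijection $\chi$ of $\widehat T$ onto itself (equivalently $Ru=u=Mu$).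 *)

theory Defs
  imports Complex_Main
begin

definition Tref :: "(real \<times> real) set" where
  "Tref = {(x1, x2). 0 \<le> x1 \<and> 0 \<le> x2 \<and> x1 + x2 \<le> 1}"

text \<open>Jacobi polynomial P_m^(a,b) for integer parameters a, b >= 0 (explicit formula;
  normalisation P_m^(a,b)(1) = (a+1)_m / m! = (m+a choose m)).\<close>
definition jacobi :: "nat \<Rightarrow> nat \<Rightarrow> nat \<Rightarrow> real \<Rightarrow> real" where
  "jacobi a b m x = (\<Sum>s\<le>m. real ((m + a) choose (m - s)) * real ((m + b) choose s)
       * ((x - 1) / 2) ^ s * ((x + 1) / 2) ^ (m - s))"

text \<open>Homogenised Jacobi polynomial: jacobi_hom a b m u v = v^m * P_m^(a,b)(u/v) for v \<noteq> 0
  (lemma jacobi_hom_eq below); it is a polynomial in (u,v), giving the polynomial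
  value of (x1+x2)^k P_k((x1-x2)/(x1+x2)) also at x1+x2 = 0.\<close>
definition jacobi_hom :: "nat \<Rightarrow> nat \<Rightarrow> nat \<Rightarrow> real \<Rightarrow> real \<Rightarrow> real" where
  "jacobi_hom a b m u v = (\<Sum>s\<le>m. real ((m + a) choose (m - s)) * real ((m + b) choose s)
       * ((u - v) / 2) ^ s * ((u + v) / 2) ^ (m - s))"

lemma jacobi_hom_eq:
  assumes "v \<noteq> 0"
  shows "jacobi_hom a b m u v = v ^ m * jacobi a b m (u / v)"
proof -
  have "((u - v) / 2) ^ s * ((u + v) / 2) ^ (m - s)
        = v ^ m * (((u / v - 1) / 2) ^ s * ((u / v + 1) / 2) ^ (m - s))" if "s \<le> m" for s
  proof -
    have 1: "(u - v) / 2 = v * ((u / v - 1) / 2)" "(u + v) / 2 = v * ((u / v + 1) / 2)"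
      using assms by (simp_all add: field_simps)
    have "v ^ s * v ^ (m - s) = v ^ m" using that by (simp add: power_add[symmetric])
    then show ?thesis unfolding 1 power_mult_distrib by (simp add: mult_ac)
  qed
  then show ?thesis
    unfolding jacobi_hom_def jacobi_def sum_distrib_left
    by (intro sum.cong) (simp_all add: mult_ac)
qed

text \<open>The basis b_{n,k} of P^perp_{n,n-1}(T):
  b_{n,k}(x1,x2) = (x1+x2)^k P^(0,2k+1)_{n-k}(2(x1+x2)-1) P^(0,0)_k((x1-x2)/(x1+x2)).\<close>
definition bbasis :: "nat \<Rightarrow> nat \<Rightarrow> real \<times> real \<Rightarrow> real" where
  "bbasis n k x = (case x of (x1, x2) \<Rightarrow>
      jacobi 0 (2 * k + 1) (n - k) (2 * (x1 + x2) - 1) * jacobi_hom 0 0 k (x1 - x2) (x1 + x2))"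

definition Mop :: "(real \<times> real \<Rightarrow> real) \<Rightarrow> real \<times> real \<Rightarrow> real" where
  "Mop p x = (case x of (x1, x2) \<Rightarrow> p (1 - x1 - x2, x2))"

definition Rop :: "(real \<times> real \<Rightarrow> real) \<Rightarrow> real \<times> real \<Rightarrow> real" where
  "Rop p x = (case x of (x1, x2) \<Rightarrow> p (x2, x1))"

definition Mmat :: "nat \<Rightarrow> nat \<Rightarrow> nat \<Rightarrow> real" where
  "Mmat n j k = (THE c :: nat \<Rightarrow> real. (\<forall>i>n. c i = 0) \<and>
       (\<forall>x. Mop (bbasis n k) x = (\<Sum>i\<le>n. bbasis n i x * c i))) j"

definition affine_map2 :: "real \<Rightarrow> real \<Rightarrow> real \<Rightarrow> real \<Rightarrow> real \<Rightarrow> real \<Rightarrow> real \<times> real \<Rightarrow> real \<times> real" where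
  "affine_map2 a b c d e f x = (case x of (x1, x2) \<Rightarrow> (a * x1 + b * x2 + e, c * x1 + d * x2 + f))"

definition totally_symmetric :: "(real \<times> real \<Rightarrow> real) \<Rightarrow> bool" where
  "totally_symmetric u \<longleftrightarrow>
     (\<forall>a b c d e f. bij_betw (affine_map2 a b c d e f) Tref Tref \<longrightarrow>
        (\<forall>x\<in>Tref. u (affine_map2 a b c d e f x) = u x))"

end

theory Submission
  imports Defs "HOL-Computational_Algebra.Polynomial"
begin

text \<open>The \<open>b\<^sub>n\<^sub>,\<^sub>k\<close> are eigenpolynomials, for the eigenvalue \<open>-n(n+2)\<close>, of a
  second-order differential operator \<open>L\<close> of the triangle that commutes with \<open>M\<close>. An
  eigenpolynomial of \<open>L\<close> is determined by its restriction to the edge \<open>x\<^sub>1 = 0\<close>, and there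
  the \<open>b\<^sub>n\<^sub>,\<^sub>i\<close> restrict to polynomials vanishing to order exactly \<open>i\<close> at the vertex, a
  triangular family. This shows that \<open>M b\<^sub>n\<^sub>,\<^sub>k\<close> has a unique expansion in the basis,
  which identifies the entries of \<open>M\<^sup>(\<^sup>n\<^sup>)\<close>.

  Since \<open>R b\<^sub>n\<^sub>,\<^sub>K = \<epsilon> b\<^sub>n\<^sub>,\<^sub>K\<close> with \<open>\<epsilon> = (-1)\<^sup>K\<close>, the polynomial \<open>r\<^sub>n\<^sub>,\<^sub>K\<close> equals
  \<open>b + \<epsilon> M b + R M b\<close>, a signed sum over the orbit of \<open>b\<close> under the group generated by
  \<open>M\<close> and \<open>R\<close>; hence \<open>M r = \<epsilon> r = R r\<close>. Total symmetry follows because the affine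
  self-bijections of the triangle are exactly the six permutations of its vertices, a group
  generated by \<open>M\<close> and \<open>R\<close>.\<close>

section \<open>Partial derivatives of bivariate polynomials\<close>

text \<open>A bivariate polynomial is a polynomial in \<open>x\<^sub>1\<close> whose coefficients are polynomials
  in \<open>x\<^sub>2\<close>; so \<open>pderiv\<close> is \<open>\<partial>/\<partial>x\<^sub>1\<close>, and \<open>pderiv2\<close> below is \<open>\<partial>/\<partial>x\<^sub>2\<close>.\<close>

definition pderiv2 :: "'a::idom poly poly \<Rightarrow> 'a poly poly" where
  "pderiv2 p = map_poly pderiv p"

lemma coeff_pderiv2: "coeff (pderiv2 p) i = pderiv (coeff p i)"
  unfolding pderiv2_def by (simp add: coeff_map_poly)

lemma pderiv2_0 [simp]: "pderiv2 0 = 0"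
  by (rule poly_eqI) (simp add: coeff_pderiv2)

lemma pderiv2_add: "pderiv2 (p + q) = pderiv2 p + pderiv2 q"
  by (rule poly_eqI) (simp add: coeff_pderiv2 pderiv_add)

lemma pderiv2_diff: "pderiv2 (p - q) = pderiv2 p - pderiv2 q"
  by (rule poly_eqI) (simp add: coeff_pderiv2 pderiv_diff)

lemma pderiv2_minus: "pderiv2 (- p) = - pderiv2 p"
  by (rule poly_eqI) (simp add: coeff_pderiv2 pderiv_minus)

lemma pderiv2_pCons: "pderiv2 (pCons a p) = pCons (pderiv a) (pderiv2 p)"
  by (rule poly_eqI) (simp add: coeff_pderiv2 coeff_pCons split: nat.split)

lemma pderiv2_const [simp]: "pderiv2 [:a:] = [:pderiv a:]"
  by (simp add: pderiv2_pCons)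

lemma pderiv2_1 [simp]: "pderiv2 1 = 0"
  by (simp add: one_pCons)

lemma pderiv_sum: "pderiv (sum f A) = (\<Sum>i\<in>A. pderiv (f i))"
  by (induction A rule: infinite_finite_induct) (auto simp: pderiv_add)

lemma pderiv_power_Suc_of_nat: "pderiv (p ^ Suc n) = of_nat (Suc n) * p ^ n * pderiv p"
  by (simp only: pderiv_power_Suc) (simp add: of_nat_poly)

lemma pderiv2_mult: "pderiv2 (p * q) = pderiv2 p * q + p * pderiv2 q"
proof (rule poly_eqI)
  fix n
  show "coeff (pderiv2 (p * q)) n = coeff (pderiv2 p * q + p * pderiv2 q) n"
    unfolding coeff_pderiv2 coeff_add coeff_mult pderiv_sum pderiv_mult sum.distrib
    by (simp add: add.commute mult.commute)
qed

lemma pderiv_pderiv2: "pderiv (pderiv2 p) = pderiv2 (pderiv p)"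
  by (rule poly_eqI) (simp add: coeff_pderiv2 coeff_pderiv pderiv_mult del: of_nat_Suc)

lemma pderiv2_pcompose:
  "pderiv2 (pcompose p q) = pcompose (pderiv2 p) q + pcompose (pderiv p) q * pderiv2 q"
  by (induction p)
     (simp_all add: pcompose_pCons pderiv2_add pderiv2_mult pderiv2_pCons pderiv_pCons
        pcompose_add algebra_simps)

type_synonym poly2 = "real poly poly"

definition X1 :: poly2 where "X1 = [:0, 1:]"
definition X2 :: poly2 where "X2 = [:[:0, 1:]:]"
definition const2 :: "real \<Rightarrow> poly2" where "const2 c = [:[:c:]:]"

lemma pderiv_X1 [simp]: "pderiv X1 = 1" by (simp add: X1_def pderiv_pCons)
lemma pderiv_X2 [simp]: "pderiv X2 = 0" by (simp add: X2_def pderiv_pCons)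
lemma pderiv2_X1 [simp]: "pderiv2 X1 = 0" by (simp add: X1_def pderiv2_pCons)
lemma pderiv2_X2 [simp]: "pderiv2 X2 = 1" by (simp add: X2_def one_pCons pderiv_pCons)
lemma pderiv_const2 [simp]: "pderiv (const2 c) = 0" by (simp add: const2_def)
lemma pderiv2_const2 [simp]: "pderiv2 (const2 c) = 0" by (simp add: const2_def)

lemma const2_0 [simp]: "const2 0 = 0" by (simp add: const2_def)
lemma const2_1 [simp]: "const2 1 = 1" by (simp add: const2_def one_pCons)
lemma const2_add: "const2 (a + b) = const2 a + const2 b" by (simp add: const2_def)
lemma const2_mult: "const2 (a * b) = const2 a * const2 b" by (simp add: const2_def)
lemma const2_numeral: "const2 (numeral n) = numeral n" by (simp add: const2_def numeral_poly)
lemma const2_of_nat: "const2 (of_nat n) = of_nat n" by (simp add: const2_def of_nat_poly)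

lemma X1_mult: "X1 * p = pCons 0 p" by (simp add: X1_def)

section \<open>The second-order operator of the triangle\<close>

text \<open>\<open>L p = div (A \<nabla>p)\<close> with \<open>A = [[x\<^sub>1(1-x\<^sub>1), -x\<^sub>1x\<^sub>2], [-x\<^sub>1x\<^sub>2, x\<^sub>2(1-x\<^sub>2)]]\<close>; as
  \<open>A\<close> kills the normal direction on each edge, \<open>L\<close> is symmetric in \<open>L\<^sup>2\<close> of the triangle and
  preserves degrees, so its eigenspaces are the spaces \<open>\<bbbP>\<^sup>\<bottom>\<^sub>n\<^sub>,\<^sub>n\<^sub>-\<^sub>1\<close>.\<close>

definition tri_op :: "poly2 \<Rightarrow> poly2" where
  "tri_op p = X1 * (1 - X1) * pderiv (pderiv p) - 2 * X1 * X2 * pderiv (pderiv2 p)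
     + X2 * (1 - X2) * pderiv2 (pderiv2 p) + (1 - 3 * X1) * pderiv p + (1 - 3 * X2) * pderiv2 p"

definition tri_gamma :: "poly2 \<Rightarrow> poly2 \<Rightarrow> poly2" where
  "tri_gamma g h = X1 * (1 - X1) * pderiv g * pderiv h
     - X1 * X2 * (pderiv g * pderiv2 h + pderiv2 g * pderiv h) + X2 * (1 - X2) * pderiv2 g * pderiv2 h"

lemma tri_op_mult: "tri_op (g * h) = g * tri_op h + h * tri_op g + 2 * tri_gamma g h"
  unfolding tri_op_def tri_gamma_def
  by (simp add: pderiv_mult pderiv2_mult pderiv_add pderiv2_add pderiv_pderiv2 algebra_simps)

lemma tri_op_add: "tri_op (g + h) = tri_op g + tri_op h"
  unfolding tri_op_def by (simp add: pderiv_add pderiv2_add algebra_simps)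

lemma tri_op_diff: "tri_op (g - h) = tri_op g - tri_op h"
  unfolding tri_op_def by (simp add: pderiv_diff pderiv2_diff algebra_simps)

lemma tri_op_0 [simp]: "tri_op 0 = 0"
  by (simp add: tri_op_def)

lemma tri_op_sum: "tri_op (sum f A) = (\<Sum>i\<in>A. tri_op (f i))"
  by (induction A rule: infinite_finite_induct) (auto simp: tri_op_add)

lemma tri_op_const2_mult: "tri_op (const2 c * g) = const2 c * tri_op g"
  unfolding tri_op_mult by (simp add: tri_op_def tri_gamma_def)

lemma tri_op_X1_mult:
  "tri_op (X1 * q) = X1 * (tri_op q + 2 * (1 - X1) * pderiv q - 2 * X2 * pderiv2 q - 3 * q) + q"
  unfolding tri_op_mult by (simp add: tri_op_def tri_gamma_def algebra_simps)

lemma tri_op_X1_power_mult: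
  "\<exists>R. tri_op (X1 ^ Suc j * q) = X1 ^ Suc j * R + of_nat ((Suc j)\<^sup>2) * X1 ^ j * q"
proof (induction j)
  case 0
  show ?case using tri_op_X1_mult[of q] by auto
next
  case (Suc j)
  then obtain R where R: "tri_op (X1 ^ Suc j * q) = X1 ^ Suc j * R + of_nat ((Suc j)\<^sup>2) * X1 ^ j * q"
    by blast
  have "pderiv (X1 ^ Suc j) = of_nat (Suc j) * X1 ^ j"
    by (simp only: pderiv_power_Suc_of_nat pderiv_X1 mult_1_right)
  then have d1: "pderiv (X1 ^ Suc j * q) = X1 ^ Suc j * pderiv q + of_nat (Suc j) * X1 ^ j * q"
    by (simp add: pderiv_mult algebra_simps)
  have X1_pow: "pderiv2 (X1 ^ i) = 0" for i
    by (induction i) (simp_all add: pderiv2_mult)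
  have d2: "pderiv2 (X1 ^ Suc j * q) = X1 ^ Suc j * pderiv2 q"
    by (simp only: pderiv2_mult X1_pow)
  have "tri_op (X1 ^ Suc (Suc j) * q) = tri_op (X1 * (X1 ^ Suc j * q))"
    by (simp add: mult.assoc)
  also have "\<dots> = X1 ^ Suc (Suc j) * (R + 2 * (1 - X1) * pderiv q - 2 * X2 * pderiv2 q - 3 * q
       - 2 * of_nat (Suc j) * q) + of_nat ((Suc (Suc j))\<^sup>2) * X1 ^ Suc j * q"
    unfolding tri_op_X1_mult R d1 d2 by (simp add: algebra_simps power2_eq_square)
  finally show ?case by blast
qed

text \<open>Viewing \<open>p\<close> as a polynomial in \<open>x\<^sub>1\<close>, \<open>coeff p 0\<close> is the restriction of \<open>p\<close> to
  the edge \<open>x\<^sub>1 = 0\<close>. An eigenpolynomial of \<open>L\<close> vanishing there is divisible by every power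
  of \<open>X1\<close>, hence zero.\<close>

lemma tri_op_eigen_eq_0:
  assumes eigen: "tri_op p = const2 c * p" and edge: "coeff p 0 = 0"
  shows "p = 0"
proof -
  have X1_factor: "\<exists>q. p = X1 * q" if "coeff p 0 = 0" for p :: poly2
    using that by (cases p) (auto simp: X1_mult)
  have "\<exists>q. p = X1 ^ Suc j * q" for j
  proof (induction j)
    case 0
    show ?case using X1_factor[OF edge] by simp
  next
    case (Suc j)
    then obtain q where q: "p = X1 ^ Suc j * q" by blast
    obtain R where R: "tri_op (X1 ^ Suc j * q) = X1 ^ Suc j * R + of_nat ((Suc j)\<^sup>2) * X1 ^ j * q"
      using tri_op_X1_power_mult by blast
    have "X1 ^ j * (X1 * (R - const2 c * q) + of_nat ((Suc j)\<^sup>2) * q) = 0"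
      using eigen unfolding q R by (simp add: algebra_simps)
    then have "X1 * (R - const2 c * q) + of_nat ((Suc j)\<^sup>2) * q = 0"
      by (simp add: X1_def)
    then have "coeff (of_nat ((Suc j)\<^sup>2) * q) 0 = 0"
      by (metis X1_mult add_0 coeff_add coeff_pCons_0 coeff_0)
    then have "coeff q 0 = 0"
      by (simp add: of_nat_poly del: of_nat_Suc)
    then obtain q' where "q = X1 * q'" using X1_factor by blast
    then show ?case using q by (intro exI[of _ q']) (simp add: mult_ac)
  qed
  then obtain q where q: "p = X1 ^ Suc (degree p) * q" by blast
  show "p = 0"
  proof (rule ccontr)
    assume "p \<noteq> 0"
    then have "q \<noteq> 0" using q by auto
    then have "degree p = Suc (degree p) + degree q"
      by (subst q) (simp add: degree_mult_eq X1_def degree_power_eq)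
    then show False by simp
  qed
qed

definition Mpoly :: "poly2 \<Rightarrow> poly2" where
  "Mpoly p = pcompose p (1 - X1 - X2)"

lemma pderiv_Mpoly: "pderiv (Mpoly p) = - Mpoly (pderiv p)"
  by (simp add: Mpoly_def pderiv_pcompose pderiv_diff)

lemma pderiv2_Mpoly: "pderiv2 (Mpoly p) = Mpoly (pderiv2 p) - Mpoly (pderiv p)"
  by (simp add: Mpoly_def pderiv2_pcompose pderiv2_diff)

lemma Mpoly_mult: "Mpoly (p * q) = Mpoly p * Mpoly q" by (simp add: Mpoly_def pcompose_mult)
lemma Mpoly_add: "Mpoly (p + q) = Mpoly p + Mpoly q" by (simp add: Mpoly_def pcompose_add)
lemma Mpoly_diff: "Mpoly (p - q) = Mpoly p - Mpoly q" by (simp add: Mpoly_def pcompose_diff)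
lemma Mpoly_minus: "Mpoly (- p) = - Mpoly p" by (simp add: Mpoly_def pcompose_uminus)
lemma Mpoly_const [simp]: "Mpoly [:c:] = [:c:]" by (simp add: Mpoly_def)
lemma Mpoly_numeral [simp]: "Mpoly (numeral k) = numeral k"
  by (metis Mpoly_const numeral_poly)
lemma Mpoly_of_nat [simp]: "Mpoly (of_nat k) = of_nat k"
  by (metis Mpoly_const of_nat_poly)
lemma Mpoly_X1 [simp]: "Mpoly X1 = 1 - X1 - X2" by (simp add: Mpoly_def X1_def pcompose_pCons)
lemma Mpoly_X2 [simp]: "Mpoly X2 = X2" by (simp add: Mpoly_def X2_def)

lemma tri_op_Mpoly: "tri_op (Mpoly p) = Mpoly (tri_op p)"
  unfolding tri_op_def
  by (simp add: pderiv_Mpoly pderiv2_Mpoly pderiv_diff pderiv2_diff pderiv_minus pderiv2_minus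
      Mpoly_mult Mpoly_add Mpoly_diff Mpoly_minus pderiv_pderiv2 algebra_simps)

definition eval2 :: "poly2 \<Rightarrow> real \<Rightarrow> real \<Rightarrow> real" where
  "eval2 p x1 x2 = poly (poly p [:x1:]) x2"

lemma eval2_add: "eval2 (p + q) y z = eval2 p y z + eval2 q y z" by (simp add: eval2_def)
lemma eval2_diff: "eval2 (p - q) y z = eval2 p y z - eval2 q y z" by (simp add: eval2_def)
lemma eval2_mult: "eval2 (p * q) y z = eval2 p y z * eval2 q y z" by (simp add: eval2_def)
lemma eval2_power: "eval2 (p ^ k) y z = eval2 p y z ^ k" by (simp add: eval2_def poly_power)
lemma eval2_sum: "eval2 (sum f A) y z = (\<Sum>i\<in>A. eval2 (f i) y z)" by (simp add: eval2_def poly_sum)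
lemma eval2_0 [simp]: "eval2 0 y z = 0" by (simp add: eval2_def)
lemma eval2_1 [simp]: "eval2 1 y z = 1" by (simp add: eval2_def)
lemma eval2_X1 [simp]: "eval2 X1 y z = y" by (simp add: eval2_def X1_def)
lemma eval2_X2 [simp]: "eval2 X2 y z = z" by (simp add: eval2_def X2_def)
lemma eval2_const2 [simp]: "eval2 (const2 c) y z = c" by (simp add: eval2_def const2_def)
lemma eval2_pCons: "eval2 (pCons a p) y z = poly a z + y * eval2 p y z" by (simp add: eval2_def)

lemma eval2_pcompose: "eval2 (pcompose p q) y z = eval2 p (eval2 q y z) z"
  by (induction p) (simp_all add: pcompose_pCons eval2_add eval2_mult eval2_pCons eval2_def)

lemma eval2_Mpoly: "eval2 (Mpoly p) y z = eval2 p (1 - y - z) z"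
  by (simp add: Mpoly_def eval2_pcompose eval2_diff)

section \<open>Shifted Jacobi polynomials\<close>

definition tvar :: "real poly" where "tvar = [:0, 1:]"
definition tvar_minus_1 :: "real poly" where "tvar_minus_1 = [:-1, 1:]"

lemma pderiv_tvar [simp]: "pderiv tvar = 1" by (simp add: tvar_def pderiv_pCons)
lemma pderiv_tvar_minus_1 [simp]: "pderiv tvar_minus_1 = 1" by (simp add: tvar_minus_1_def pderiv_pCons)

definition jacobi_op :: "nat \<Rightarrow> real poly \<Rightarrow> real poly" where
  "jacobi_op \<beta> f = (tvar - tvar * tvar) * pderiv (pderiv f)
     + ([:of_nat \<beta> + 1:] - [:of_nat \<beta> + 2:] * tvar) * pderiv f"

lemma jacobi_op_add: "jacobi_op \<beta> (f + g) = jacobi_op \<beta> f + jacobi_op \<beta> g"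
  by (simp add: jacobi_op_def pderiv_add algebra_simps smult_add_right)

lemma jacobi_op_smult: "jacobi_op \<beta> (smult c f) = smult c (jacobi_op \<beta> f)"
  by (simp add: jacobi_op_def pderiv_smult smult_add_right smult_diff_right mult_smult_right)

lemma jacobi_op_0 [simp]: "jacobi_op \<beta> 0 = 0"
  by (simp add: jacobi_op_def)

lemma jacobi_op_sum: "jacobi_op \<beta> (sum f A) = (\<Sum>i\<in>A. jacobi_op \<beta> (f i))"
  by (induction A rule: infinite_finite_induct) (auto simp: jacobi_op_add)

lemma jacobi_op_monomial:
  "jacobi_op \<beta> (tvar_minus_1 ^ r * tvar ^ q) =
     - smult (of_nat (r * r)) (tvar_minus_1 ^ (r - 1) * tvar ^ (q + 1))
     - smult (of_nat (q * (q + \<beta>))) (tvar_minus_1 ^ (r + 1) * tvar ^ (q - 1))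
     - smult (of_nat (2 * r * q + (\<beta> + 1) * r + q)) (tvar_minus_1 ^ r * tvar ^ q)"
proof -
  have op: "jacobi_op \<beta> f = - tvar * tvar_minus_1 * pderiv (pderiv f)
      - ((of_nat \<beta> + 1) * tvar_minus_1 + tvar) * pderiv f" for f
  proof -
    have 1: "tvar - tvar * tvar = - tvar * tvar_minus_1"
      by (simp add: tvar_def tvar_minus_1_def)
    have 2: "[:of_nat \<beta> + 1:] - [:of_nat \<beta> + 2:] * tvar = - ((of_nat \<beta> + 1) * tvar_minus_1 + tvar)"
      by (simp add: tvar_def tvar_minus_1_def of_nat_poly algebra_simps)
    show ?thesis unfolding jacobi_op_def 1 2 by (simp add: algebra_simps)
  qed
  have cases: "i = 0 \<or> i = Suc 0 \<or> (\<exists>i'. i = Suc (Suc i'))" for i :: nat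
    by presburger
  have "jacobi_op \<beta> (tvar_minus_1 ^ r * tvar ^ q) =
     - of_nat (r * r) * tvar_minus_1 ^ (r - 1) * tvar ^ (q + 1)
     - of_nat q * (of_nat q + of_nat \<beta>) * tvar_minus_1 ^ (r + 1) * tvar ^ (q - 1)
     - of_nat (2 * r * q + (\<beta> + 1) * r + q) * tvar_minus_1 ^ r * tvar ^ q"
    using cases[of r] cases[of q]
    by (elim disjE exE)
       (simp_all add: op pderiv_mult pderiv_add pderiv_diff pderiv_minus pderiv_power_Suc_of_nat
          algebra_simps del: power_Suc,
        simp_all add: algebra_simps)
  then show ?thesis
    by (simp add: of_nat_poly algebra_simps)
qed

definition shifted_jacobi_coeff :: "nat \<Rightarrow> nat \<Rightarrow> nat \<Rightarrow> real" where
  "shifted_jacobi_coeff \<beta> m r = real (m choose r) * real ((m + \<beta>) choose r)"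

definition shifted_jacobi :: "nat \<Rightarrow> nat \<Rightarrow> real poly" where
  "shifted_jacobi \<beta> m =
     (\<Sum>r\<le>m. smult (shifted_jacobi_coeff \<beta> m r) (tvar_minus_1 ^ r * tvar ^ (m - r)))"

lemma Suc_times_binomial_Suc: "(n choose Suc r) * Suc r = (n choose r) * (n - r)"
  using Suc_times_binomial[of r "n - 1"] binomial_absorb_comp[of n r]
  by (cases n) (simp_all add: mult.commute)

lemma shifted_jacobi_coeff_Suc:
  "shifted_jacobi_coeff \<beta> m (Suc r) * of_nat (Suc r * Suc r)
     = shifted_jacobi_coeff \<beta> m r * of_nat ((m - r) * (m - r + \<beta>))"
proof (cases "r < m")
  case True
  then have "m + \<beta> - r = m - r + \<beta>" by simp
  then show ?thesis
    using Suc_times_binomial_Suc[of m r] Suc_times_binomial_Suc[of "m + \<beta>" r]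
    unfolding shifted_jacobi_coeff_def
    by (metis (no_types, opaque_lifting) mult.assoc mult.left_commute of_nat_mult)
qed (simp add: shifted_jacobi_coeff_def)

lemma smult_sum_right: "smult c (sum f A) = (\<Sum>i\<in>A. smult c (f i))"
  by (induction A rule: infinite_finite_induct) (auto simp: smult_add_right)

lemma shifted_jacobi_lowering_sum:
  "(\<Sum>r\<le>m. smult (shifted_jacobi_coeff \<beta> m r * of_nat (r * r))
                 (tvar_minus_1 ^ (r - 1) * tvar ^ (m - r + 1)))
   = (\<Sum>r\<le>m. smult (shifted_jacobi_coeff \<beta> m r * of_nat ((m - r) * (m - r + \<beta>)))
                 (tvar_minus_1 ^ r * tvar ^ (m - r)))"
proof (cases m)
  case (Suc m')
  have "(\<Sum>r\<le>m. smult (shifted_jacobi_coeff \<beta> m r * of_nat (r * r))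
                 (tvar_minus_1 ^ (r - 1) * tvar ^ (m - r + 1)))
     = (\<Sum>r\<le>m'. smult (shifted_jacobi_coeff \<beta> m (Suc r) * of_nat (Suc r * Suc r))
                 (tvar_minus_1 ^ r * tvar ^ (m - r)))"
    unfolding Suc sum.atMost_Suc_shift by (auto intro!: sum.cong simp: Suc_diff_le)
  also have "\<dots> = (\<Sum>r\<le>m'. smult (shifted_jacobi_coeff \<beta> m r * of_nat ((m - r) * (m - r + \<beta>)))
                 (tvar_minus_1 ^ r * tvar ^ (m - r)))"
    by (simp only: shifted_jacobi_coeff_Suc)
  finally show ?thesis
    unfolding Suc sum.atMost_Suc by simp
qed simp

lemma shifted_jacobi_raising_sum:
  "(\<Sum>r\<le>m. smult (shifted_jacobi_coeff \<beta> m r * of_nat ((m - r) * (m - r + \<beta>)))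
                 (tvar_minus_1 ^ (r + 1) * tvar ^ (m - r - 1)))
   = (\<Sum>r\<le>m. smult (shifted_jacobi_coeff \<beta> m r * of_nat (r * r))
                 (tvar_minus_1 ^ r * tvar ^ (m - r)))"
proof (cases m)
  case (Suc m')
  have "(\<Sum>r\<le>m. smult (shifted_jacobi_coeff \<beta> m r * of_nat ((m - r) * (m - r + \<beta>)))
                 (tvar_minus_1 ^ (r + 1) * tvar ^ (m - r - 1)))
     = (\<Sum>r\<le>m'. smult (shifted_jacobi_coeff \<beta> m r * of_nat ((m - r) * (m - r + \<beta>)))
                 (tvar_minus_1 ^ Suc r * tvar ^ (m - Suc r)))"
    unfolding Suc sum.atMost_Suc by simp
  also have "\<dots> = (\<Sum>r\<le>m'. smult (shifted_jacobi_coeff \<beta> m (Suc r) * of_nat (Suc r * Suc r))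
                 (tvar_minus_1 ^ Suc r * tvar ^ (m - Suc r)))"
    by (simp only: shifted_jacobi_coeff_Suc)
  also have "\<dots> = (\<Sum>r\<le>m. smult (shifted_jacobi_coeff \<beta> m r * of_nat (r * r))
                 (tvar_minus_1 ^ r * tvar ^ (m - r)))"
    unfolding Suc sum.atMost_Suc_shift by simp
  finally show ?thesis .
qed simp

lemma shifted_jacobi_ode:
  "jacobi_op \<beta> (shifted_jacobi \<beta> m) = - smult (of_nat (m * (m + \<beta> + 1))) (shifted_jacobi \<beta> m)"
proof -
  define a where "a = shifted_jacobi_coeff \<beta> m"
  define \<phi> where "\<phi> r q = tvar_minus_1 ^ r * tvar ^ q" for r q
  define diag where "diag r = 2 * r * (m - r) + (\<beta> + 1) * r + (m - r)" for r
  have eigenvalue: "(m - r) * (m - r + \<beta>) + r * r + diag r = m * (m + \<beta> + 1)" if "r \<le> m" for r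
  proof -
    obtain d where "m = r + d" using \<open>r \<le> m\<close> le_Suc_ex by blast
    then show ?thesis by (simp add: diag_def algebra_simps)
  qed
  have "jacobi_op \<beta> (shifted_jacobi \<beta> m) =
      (\<Sum>r\<le>m. - smult (a r * of_nat (r * r)) (\<phi> (r - 1) (m - r + 1))
        - smult (a r * of_nat ((m - r) * (m - r + \<beta>))) (\<phi> (r + 1) (m - r - 1))
        - smult (a r * of_nat (diag r)) (\<phi> r (m - r)))"
    unfolding shifted_jacobi_def jacobi_op_sum jacobi_op_smult jacobi_op_monomial a_def \<phi>_def diag_def
    by (simp only: smult_diff_right smult_minus_right smult_smult)
  also have "\<dots> = - (\<Sum>r\<le>m. smult (a r * of_nat ((m - r) * (m - r + \<beta>))) (\<phi> r (m - r))
        + smult (a r * of_nat (r * r)) (\<phi> r (m - r)) + smult (a r * of_nat (diag r)) (\<phi> r (m - r)))"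
    unfolding sum_subtractf sum_negf sum.distrib
      shifted_jacobi_lowering_sum[of \<beta> m, folded a_def \<phi>_def]
      shifted_jacobi_raising_sum[of \<beta> m, folded a_def \<phi>_def]
    by (simp add: algebra_simps)
  also have "\<dots> = - (\<Sum>r\<le>m. smult (a r * of_nat (m * (m + \<beta> + 1))) (\<phi> r (m - r)))"
    by (intro arg_cong[where f = uminus] sum.cong refl)
       (simp only: smult_add_left[symmetric] distrib_left[symmetric] of_nat_add[symmetric] eigenvalue atMost_iff)
  also have "\<dots> = - smult (of_nat (m * (m + \<beta> + 1))) (shifted_jacobi \<beta> m)"
    unfolding shifted_jacobi_def smult_sum_right a_def \<phi>_def by (simp add: smult_smult mult.commute)
  finally show ?thesis .
qed

section \<open>The basis as eigenpolynomials\<close>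

definition poly_at_sum :: "real poly \<Rightarrow> poly2" where
  "poly_at_sum F = poly (map_poly const2 F) (X1 + X2)"

lemma poly_at_sum_0 [simp]: "poly_at_sum 0 = 0"
  by (simp add: poly_at_sum_def)

lemma poly_at_sum_pCons: "poly_at_sum (pCons a F) = const2 a + (X1 + X2) * poly_at_sum F"
  by (simp add: poly_at_sum_def map_poly_pCons const2_def)

lemma poly_at_sum_const [simp]: "poly_at_sum [:c:] = const2 c"
  using poly_at_sum_pCons[of c 0] by simp

lemma poly_at_sum_add: "poly_at_sum (F + G) = poly_at_sum F + poly_at_sum G"
proof (induction F arbitrary: G)
  case (pCons a F)
  then show ?case
    by (cases G) (simp_all add: poly_at_sum_pCons const2_add algebra_simps)
qed simp

lemma poly_at_sum_smult: "poly_at_sum (smult c F) = const2 c * poly_at_sum F"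
  by (induction F) (simp_all add: poly_at_sum_pCons const2_mult algebra_simps)

lemma poly_at_sum_mult: "poly_at_sum (F * G) = poly_at_sum F * poly_at_sum G"
  by (induction F) (simp_all add: poly_at_sum_pCons poly_at_sum_add poly_at_sum_smult algebra_simps)

lemma poly_at_sum_diff: "poly_at_sum (F - G) = poly_at_sum F - poly_at_sum G"
proof -
  have "poly_at_sum (- G) = - poly_at_sum G"
    by (induction G) (simp_all add: poly_at_sum_pCons const2_def)
  then show ?thesis
    using poly_at_sum_add[of F "- G"] by simp
qed

lemma poly_at_sum_tvar [simp]: "poly_at_sum tvar = X1 + X2"
  by (simp add: tvar_def poly_at_sum_pCons)

lemma pderiv_poly_at_sum: "pderiv (poly_at_sum F) = poly_at_sum (pderiv F)"
  by (induction F) (simp_all add: poly_at_sum_pCons pderiv_pCons pderiv_add pderiv_mult poly_at_sum_add)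

lemma pderiv2_poly_at_sum: "pderiv2 (poly_at_sum F) = poly_at_sum (pderiv F)"
  by (induction F) (simp_all add: poly_at_sum_pCons pderiv_pCons pderiv2_add pderiv2_mult poly_at_sum_add)

lemma eval2_poly_at_sum: "eval2 (poly_at_sum F) y z = poly F (y + z)"
  by (induction F) (simp_all add: poly_at_sum_pCons eval2_add eval2_mult)

lemma poly_at_sum_jacobi_op:
  "poly_at_sum (jacobi_op \<beta> F) = ((X1 + X2) - (X1 + X2) * (X1 + X2)) * poly_at_sum (pderiv (pderiv F))
     + (const2 (of_nat \<beta> + 1) - const2 (of_nat \<beta> + 2) * (X1 + X2)) * poly_at_sum (pderiv F)"
  unfolding jacobi_op_def
  by (simp add: poly_at_sum_add poly_at_sum_diff poly_at_sum_mult poly_at_sum_smult)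

lemma tri_op_poly_at_sum:
  "tri_op (poly_at_sum F) = ((X1 + X2) - (X1 + X2) * (X1 + X2)) * poly_at_sum (pderiv (pderiv F))
     + (2 - 3 * (X1 + X2)) * poly_at_sum (pderiv F)"
  unfolding tri_op_def by (simp add: pderiv_poly_at_sum pderiv2_poly_at_sum algebra_simps)

definition euler_op :: "poly2 \<Rightarrow> poly2" where
  "euler_op p = X1 * pderiv p + X2 * pderiv2 p"

definition lowering_op :: "poly2 \<Rightarrow> poly2" where
  "lowering_op p = pderiv (X1 * pderiv p) + pderiv2 (X2 * pderiv2 p)"

lemma tri_op_eq_lowering_euler:
  "tri_op p = lowering_op p - euler_op (euler_op p) - 2 * euler_op p"
  unfolding tri_op_def lowering_op_def euler_op_def
  by (simp add: pderiv_mult pderiv2_mult pderiv_add pderiv2_add pderiv_pderiv2 algebra_simps)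

lemma euler_op_add: "euler_op (p + q) = euler_op p + euler_op q"
  by (simp add: euler_op_def pderiv_add pderiv2_add algebra_simps)

lemma lowering_op_add: "lowering_op (p + q) = lowering_op p + lowering_op q"
  by (simp add: lowering_op_def pderiv_add pderiv2_add algebra_simps)

lemma euler_op_0 [simp]: "euler_op 0 = 0"
  by (simp add: euler_op_def)

lemma lowering_op_0 [simp]: "lowering_op 0 = 0"
  by (simp add: lowering_op_def)

lemma euler_op_sum: "euler_op (sum f A) = (\<Sum>i\<in>A. euler_op (f i))"
  by (induction A rule: infinite_finite_induct) (auto simp: euler_op_add)

lemma lowering_op_sum: "lowering_op (sum f A) = (\<Sum>i\<in>A. lowering_op (f i))"
  by (induction A rule: infinite_finite_induct) (auto simp: lowering_op_add)

lemma euler_op_const2_mult: "euler_op (const2 c * p) = const2 c * euler_op p"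
  by (simp add: euler_op_def pderiv_mult pderiv2_mult algebra_simps)

lemma lowering_op_const2_mult: "lowering_op (const2 c * p) = const2 c * lowering_op p"
  by (simp add: lowering_op_def pderiv_mult pderiv2_mult algebra_simps)

lemma euler_op_of_nat_mult: "euler_op (of_nat k * p) = of_nat k * euler_op p"
  using euler_op_const2_mult[of "of_nat k" p] by (simp add: const2_of_nat)

lemma pderiv_monomial2: "pderiv (X1 ^ a * X2 ^ b) = of_nat a * (X1 ^ (a - 1) * X2 ^ b)"
proof -
  have "pderiv (X2 ^ b) = 0" by (induction b) (simp_all add: pderiv_mult)
  then show ?thesis
    by (cases a) (simp_all add: pderiv_mult pderiv_power_Suc_of_nat algebra_simps del: power_Suc)
qed

lemma pderiv2_monomial2: "pderiv2 (X1 ^ a * X2 ^ b) = of_nat b * (X1 ^ a * X2 ^ (b - 1))"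
proof -
  have "pderiv2 (X1 ^ a) = 0" by (induction a) (simp_all add: pderiv2_mult)
  moreover have "pderiv2 (X2 ^ Suc b) = of_nat (Suc b) * X2 ^ b" for b
    by (induction b) (simp_all add: pderiv2_mult algebra_simps)
  ultimately show ?thesis
    by (cases b) (simp_all add: pderiv2_mult algebra_simps del: power_Suc)
qed

lemma X1_pderiv_monomial2: "X1 * pderiv (X1 ^ a * X2 ^ b) = of_nat a * (X1 ^ a * X2 ^ b)"
  unfolding pderiv_monomial2 by (cases a) (simp_all add: algebra_simps)

lemma X2_pderiv2_monomial2: "X2 * pderiv2 (X1 ^ a * X2 ^ b) = of_nat b * (X1 ^ a * X2 ^ b)"
  unfolding pderiv2_monomial2 by (cases b) (simp_all add: algebra_simps)

lemma euler_op_monomial2: "euler_op (X1 ^ a * X2 ^ b) = of_nat (a + b) * (X1 ^ a * X2 ^ b)"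
  unfolding euler_op_def X1_pderiv_monomial2 X2_pderiv2_monomial2 by (simp add: algebra_simps)

lemma lowering_op_monomial2:
  "lowering_op (X1 ^ a * X2 ^ b)
     = of_nat (a * a) * (X1 ^ (a - 1) * X2 ^ b) + of_nat (b * b) * (X1 ^ a * X2 ^ (b - 1))"
proof -
  have pderiv_of_nat_mult: "pderiv (of_nat k * p) = of_nat k * pderiv p" for k and p :: poly2
    by (simp add: pderiv_mult)
  have pderiv2_of_nat_mult: "pderiv2 (of_nat k * p) = of_nat k * pderiv2 p" for k and p :: poly2
    by (metis pderiv2_const2 pderiv2_mult add_0 const2_of_nat mult_zero_left)
  show ?thesis
    unfolding lowering_op_def X1_pderiv_monomial2 X2_pderiv2_monomial2
    unfolding pderiv_of_nat_mult pderiv2_of_nat_mult pderiv_monomial2 pderiv2_monomial2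
    by (simp add: algebra_simps)
qed

definition legendre_hom_coeff :: "nat \<Rightarrow> nat \<Rightarrow> real" where
  "legendre_hom_coeff k s = real (k choose (k - s)) * real (k choose s) * (-1) ^ s"

definition legendre_hom :: "nat \<Rightarrow> poly2" where
  "legendre_hom k = (\<Sum>s\<le>k. const2 (legendre_hom_coeff k s) * (X1 ^ (k - s) * X2 ^ s))"

lemma euler_op_legendre_hom: "euler_op (legendre_hom k) = of_nat k * legendre_hom k"
  unfolding legendre_hom_def euler_op_sum euler_op_const2_mult euler_op_monomial2 sum_distrib_left
  by (intro sum.cong refl) (simp add: algebra_simps)

lemma legendre_hom_coeff_Suc:
  assumes "s < k"
  shows "legendre_hom_coeff k s * (of_nat (k - s) * of_nat (k - s))
           + legendre_hom_coeff k (Suc s) * (of_nat (Suc s) * of_nat (Suc s)) = 0"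
proof -
  have b: "real (k choose Suc s) * of_nat (Suc s) = real (k choose s) * of_nat (k - s)"
    using Suc_times_binomial_Suc[of k s] by (metis of_nat_mult)
  have "legendre_hom_coeff k (Suc s) * (of_nat (Suc s) * of_nat (Suc s))
      = - ((real (k choose Suc s) * of_nat (Suc s)) * (real (k choose Suc s) * of_nat (Suc s))) * (-1) ^ s"
    unfolding legendre_hom_coeff_def using assms by (simp add: binomial_symmetric[symmetric] algebra_simps)
  also have "\<dots> = - ((real (k choose s) * of_nat (k - s)) * (real (k choose s) * of_nat (k - s))) * (-1) ^ s"
    by (simp only: b)
  also have "\<dots> = - legendre_hom_coeff k s * (of_nat (k - s) * of_nat (k - s))"
    unfolding legendre_hom_coeff_def using assms by (simp add: binomial_symmetric[symmetric] algebra_simps)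
  finally show ?thesis by simp
qed

lemma lowering_op_legendre_hom: "lowering_op (legendre_hom k) = 0"
proof (cases k)
  case (Suc k')
  let ?c = legendre_hom_coeff
  have "lowering_op (legendre_hom k)
      = (\<Sum>s\<le>k. const2 (?c k s * of_nat ((k - s) * (k - s))) * (X1 ^ (k - s - 1) * X2 ^ s))
      + (\<Sum>s\<le>k. const2 (?c k s * of_nat (s * s)) * (X1 ^ (k - s) * X2 ^ (s - 1)))"
    unfolding legendre_hom_def lowering_op_sum lowering_op_const2_mult lowering_op_monomial2
      sum.distrib[symmetric]
    by (intro sum.cong refl) (simp add: const2_mult const2_of_nat algebra_simps)
  also have "\<dots> = (\<Sum>s\<le>k'. const2 (?c k s * of_nat ((k - s) * (k - s))) * (X1 ^ (k' - s) * X2 ^ s))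
      + (\<Sum>s\<le>k'. const2 (?c k (Suc s) * of_nat (Suc s * Suc s)) * (X1 ^ (k' - s) * X2 ^ s))"
  proof -
    have "(\<Sum>s\<le>k. const2 (?c k s * of_nat ((k - s) * (k - s))) * (X1 ^ (k - s - 1) * X2 ^ s))
        = (\<Sum>s\<le>k'. const2 (?c k s * of_nat ((k - s) * (k - s))) * (X1 ^ (k' - s) * X2 ^ s))"
      unfolding Suc sum.atMost_Suc by simp
    moreover have "(\<Sum>s\<le>k. const2 (?c k s * of_nat (s * s)) * (X1 ^ (k - s) * X2 ^ (s - 1)))
        = (\<Sum>s\<le>k'. const2 (?c k (Suc s) * of_nat (Suc s * Suc s)) * (X1 ^ (k' - s) * X2 ^ s))"
      unfolding Suc sum.atMost_Suc_shift by simp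
    ultimately show ?thesis by simp
  qed
  also have "\<dots> = (\<Sum>s\<le>k'. const2 (?c k s * (of_nat (k - s) * of_nat (k - s))
      + ?c k (Suc s) * (of_nat (Suc s) * of_nat (Suc s))) * (X1 ^ (k' - s) * X2 ^ s))"
    unfolding sum.distrib[symmetric]
    by (intro sum.cong refl) (simp only: of_nat_mult const2_add distrib_right)
  also have "\<dots> = 0"
  proof (intro sum.neutral ballI)
    fix s assume "s \<in> {..k'}"
    then have "s < k" using Suc by simp
    from legendre_hom_coeff_Suc[OF this] show "const2 (?c k s * (of_nat (k - s) * of_nat (k - s))
      + ?c k (Suc s) * (of_nat (Suc s) * of_nat (Suc s))) * (X1 ^ (k' - s) * X2 ^ s) = 0"
      by (simp only: const2_0 mult_zero_left)
  qed
  finally show ?thesis .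
qed (simp add: legendre_hom_def lowering_op_def)

lemma tri_op_legendre_hom: "tri_op (legendre_hom k) = - of_nat (k * k + 2 * k) * legendre_hom k"
  unfolding tri_op_eq_lowering_euler lowering_op_legendre_hom euler_op_legendre_hom euler_op_of_nat_mult
  by (simp add: algebra_simps)

lemma tri_gamma_poly_at_sum:
  "tri_gamma (poly_at_sum F) h = poly_at_sum (pderiv F) * (1 - (X1 + X2)) * euler_op h"
  unfolding tri_gamma_def euler_op_def pderiv_poly_at_sum pderiv2_poly_at_sum
  by (simp add: algebra_simps)

definition bpoly :: "nat \<Rightarrow> nat \<Rightarrow> poly2" where
  "bpoly n k = poly_at_sum (shifted_jacobi (2 * k + 1) (n - k)) * legendre_hom k"

lemma tri_op_bpoly:
  assumes "k \<le> n"
  shows "tri_op (bpoly n k) = - of_nat (n * n + 2 * n) * bpoly n k"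
proof -
  define m where "m = n - k"
  have n: "n = m + k" using assms m_def by simp
  define F where "F = shifted_jacobi (2 * k + 1) m"
  define P where "P = poly_at_sum F"
  define P1 where "P1 = poly_at_sum (pderiv F)"
  define P2 where "P2 = poly_at_sum (pderiv (pderiv F))"
  let ?S = "X1 + X2"
  have "poly_at_sum (jacobi_op (2 * k + 1) F + smult (of_nat (m * (m + (2 * k + 1) + 1))) F) = 0"
    unfolding F_def shifted_jacobi_ode by simp
  then have ode: "(?S - ?S * ?S) * P2 + ((of_nat k * 2 + 2) - (of_nat k * 2 + 3) * ?S) * P1
     + (of_nat m * (of_nat m + of_nat k * 2 + 2)) * P = 0"
    unfolding poly_at_sum_add poly_at_sum_jacobi_op poly_at_sum_smult P_def P1_def P2_def
    by (simp add: const2_add const2_mult const2_of_nat const2_numeral algebra_simps)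
  have "tri_op (bpoly n k) + of_nat (n * n + 2 * n) * bpoly n k
     = legendre_hom k * ((?S - ?S * ?S) * P2 + ((of_nat k * 2 + 2) - (of_nat k * 2 + 3) * ?S) * P1
       + (of_nat m * (of_nat m + of_nat k * 2 + 2)) * P)"
    unfolding bpoly_def m_def[symmetric] P_def P1_def P2_def F_def tri_op_mult tri_op_legendre_hom
      tri_gamma_poly_at_sum euler_op_legendre_hom tri_op_poly_at_sum n
    by (simp add: algebra_simps)
  then have "tri_op (bpoly n k) + of_nat (n * n + 2 * n) * bpoly n k = 0"
    unfolding ode by simp
  then show ?thesis
    by (simp only: add_eq_0_iff2 minus_mult_left)
qed

section \<open>The matrix of \<open>M\<close>\<close>

lemma eval2_legendre_hom: "eval2 (legendre_hom k) y z = jacobi_hom 0 0 k (y - z) (y + z)"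
proof -
  have half: "(y - z - (y + z)) / 2 = - z" "(y - z + (y + z)) / 2 = y" by simp_all
  show ?thesis
    unfolding legendre_hom_def eval2_sum jacobi_hom_def half
    by (intro sum.cong refl)
       (simp add: eval2_mult eval2_power legendre_hom_coeff_def power_minus[of z])
qed

lemma poly_shifted_jacobi: "poly (shifted_jacobi \<beta> m) t = jacobi 0 \<beta> m (2 * t - 1)"
proof -
  have half: "(2 * t - 1 - 1) / 2 = t - 1" "(2 * t - 1 + 1) / 2 = t" by simp_all
  show ?thesis
    unfolding shifted_jacobi_def jacobi_def poly_sum half
    by (intro sum.cong refl)
       (simp add: poly_power tvar_def tvar_minus_1_def shifted_jacobi_coeff_def
          binomial_symmetric[symmetric] mult.assoc)
qed

lemma eval2_bpoly: "eval2 (bpoly n k) y z = bbasis n k (y, z)"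
  unfolding bpoly_def bbasis_def eval2_mult eval2_poly_at_sum eval2_legendre_hom poly_shifted_jacobi
  by simp

lemma coeff_0_poly_at_sum: "coeff (poly_at_sum F) 0 = F"
  by (induction F) (simp_all add: poly_at_sum_pCons coeff_mult_0 X1_def X2_def const2_def)

lemma coeff_0_legendre_hom: "coeff (legendre_hom k) 0 = monom ((-1) ^ k) k"
proof -
  have "coeff (legendre_hom k) 0 = (\<Sum>s\<le>k. if s = k then monom ((-1) ^ k) k else 0)"
    unfolding legendre_hom_def coeff_sum
    by (intro sum.cong refl)
       (auto simp: coeff_mult_0 coeff_0_power const2_def X1_def X2_def legendre_hom_coeff_def monom_altdef)
  then show ?thesis by simp
qed

lemma coeff_0_bpoly: "coeff (bpoly n i) 0 = monom ((-1) ^ i) i * shifted_jacobi (2 * i + 1) (n - i)"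
  unfolding bpoly_def coeff_mult_0 coeff_0_poly_at_sum coeff_0_legendre_hom by (simp add: mult.commute)

lemma degree_shifted_jacobi: "degree (shifted_jacobi \<beta> m) \<le> m"
  unfolding shifted_jacobi_def
proof (intro degree_sum_le finite_atMost)
  fix r assume "r \<in> {..m}"
  have "degree (tvar_minus_1 ^ r) \<le> r" "degree (tvar ^ (m - r)) \<le> m - r"
    using degree_power_le[of tvar_minus_1 r] degree_power_le[of tvar "m - r"]
    by (simp_all add: tvar_def tvar_minus_1_def)
  then have "degree (tvar_minus_1 ^ r * tvar ^ (m - r)) \<le> m"
    using degree_mult_le[of "tvar_minus_1 ^ r" "tvar ^ (m - r)"] \<open>r \<in> {..m}\<close> by simp
  then show "degree (smult (shifted_jacobi_coeff \<beta> m r) (tvar_minus_1 ^ r * tvar ^ (m - r))) \<le> m"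
    using degree_smult_le order_trans by blast
qed

lemma coeff_0_shifted_jacobi: "coeff (shifted_jacobi \<beta> m) 0 \<noteq> 0"
proof -
  have "coeff (shifted_jacobi \<beta> m) 0 = (\<Sum>r\<le>m. if r = m then shifted_jacobi_coeff \<beta> m m * (-1) ^ m else 0)"
    unfolding shifted_jacobi_def poly_0_coeff_0[symmetric] poly_sum
    by (intro sum.cong refl) (auto simp: tvar_def tvar_minus_1_def poly_power)
  then show ?thesis by (simp add: shifted_jacobi_coeff_def)
qed

lemma coeff_0_bpoly_triangular:
  assumes "i \<le> n"
  shows "\<And>t. t < i \<Longrightarrow> coeff (coeff (bpoly n i) 0) t = 0"
    and "coeff (coeff (bpoly n i) 0) i \<noteq> 0"
    and "degree (coeff (bpoly n i) 0) \<le> n"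
proof -
  show "coeff (coeff (bpoly n i) 0) t = 0" if "t < i" for t
    using that by (simp add: coeff_0_bpoly coeff_monom_mult)
  show "coeff (coeff (bpoly n i) 0) i \<noteq> 0"
    using coeff_0_shifted_jacobi by (simp add: coeff_0_bpoly coeff_monom_mult)
  have "degree (coeff (bpoly n i) 0) \<le> i + (n - i)"
    unfolding coeff_0_bpoly
    using degree_mult_le[of "monom ((-1) ^ i) i" "shifted_jacobi (2 * i + 1) (n - i)"]
      degree_monom_le[of "(-1::real) ^ i" i] degree_shifted_jacobi[of "2 * i + 1" "n - i"]
    by linarith
  then show "degree (coeff (bpoly n i) 0) \<le> n" using assms by simp
qed

lemma triangular_polys_span:
  fixes g :: "nat \<Rightarrow> 'a::field poly"
  assumes low: "\<And>i t. i \<le> n \<Longrightarrow> t < i \<Longrightarrow> coeff (g i) t = 0"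
      and diag: "\<And>i. i \<le> n \<Longrightarrow> coeff (g i) i \<noteq> 0"
      and deg: "\<And>i. i \<le> n \<Longrightarrow> degree (g i) \<le> n"
      and "degree p \<le> n"
  shows "\<exists>c. p = (\<Sum>i\<le>n. smult (c i) (g i))"
proof -
  have "\<forall>p. degree p \<le> n \<longrightarrow> (\<forall>t<j. coeff p t = 0) \<longrightarrow> (\<exists>c. p = (\<Sum>i\<in>{j..n}. smult (c i) (g i)))"
    if "j \<le> Suc n" for j
    using that
  proof (induction j rule: inc_induct)
    case base
    show ?case
    proof (intro allI impI)
      fix p :: "'a poly" assume "degree p \<le> n" "\<forall>t<Suc n. coeff p t = 0"
      then have "p = 0"
      proof (intro poly_eqI)
        fix t
        show "coeff p t = coeff 0 t"
          using \<open>degree p \<le> n\<close> \<open>\<forall>t<Suc n. coeff p t = 0\<close>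
          by (cases "t \<le> n") (simp_all add: coeff_eq_0)
      qed
      then show "\<exists>c. p = (\<Sum>i\<in>{Suc n..n}. smult (c i) (g i))" by simp
    qed
  next
    case (step j)
    show ?case
    proof (intro allI impI)
      fix p :: "'a poly" assume p: "degree p \<le> n" "\<forall>t<j. coeff p t = 0"
      have "j \<le> n" using step by simp
      define a where "a = coeff p j / coeff (g j) j"
      have "degree (smult a (g j)) \<le> n"
        using deg[OF \<open>j \<le> n\<close>] degree_smult_le[of a "g j"] by linarith
      then have "degree (p - smult a (g j)) \<le> n"
        using p(1) by (intro degree_diff_le)
      moreover have "\<forall>t<Suc j. coeff (p - smult a (g j)) t = 0"
      proof (intro allI impI)
        fix t assume "t < Suc j"
        then consider "t < j" | "t = j" by linarith
        then show "coeff (p - smult a (g j)) t = 0"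
          using p(2) low[OF \<open>j \<le> n\<close>] diag[OF \<open>j \<le> n\<close>] by cases (simp_all add: a_def)
      qed
      ultimately obtain c where c: "p - smult a (g j) = (\<Sum>i\<in>{Suc j..n}. smult (c i) (g i))"
        using step.IH by blast
      have "p = smult a (g j) + (\<Sum>i\<in>{Suc j..n}. smult (c i) (g i))"
        using c by (simp add: diff_eq_eq)
      also have "\<dots> = (\<Sum>i\<in>{j..n}. smult ((c(j := a)) i) (g i))"
      proof -
        have e: "{j..n} = insert j {Suc j..n}" using \<open>j \<le> n\<close> by auto
        show ?thesis unfolding e by (subst sum.insert) (auto intro!: sum.cong)
      qed
      finally
      show "\<exists>c. p = (\<Sum>i\<in>{j..n}. smult (c i) (g i))" by blast
    qed
  qed
  from this[of 0] \<open>degree p \<le> n\<close> show ?thesis by (simp add: atLeast0AtMost)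
qed

lemma triangular_polys_independent:
  fixes g :: "nat \<Rightarrow> 'a::field poly"
  assumes low: "\<And>i t. i \<le> n \<Longrightarrow> t < i \<Longrightarrow> coeff (g i) t = 0"
      and diag: "\<And>i. i \<le> n \<Longrightarrow> coeff (g i) i \<noteq> 0"
      and zero: "(\<Sum>i\<le>n. smult (c i) (g i)) = 0"
  shows "i \<le> n \<Longrightarrow> c i = 0"
proof (induction i rule: less_induct)
  case (less j)
  have "0 = coeff (\<Sum>l\<le>n. smult (c l) (g l)) j" using zero by simp
  also have "\<dots> = (\<Sum>l\<le>n. if l = j then c j * coeff (g j) j else 0)"
    unfolding coeff_sum coeff_smult
  proof (intro sum.cong refl)
    fix l assume "l \<in> {..n}"
    then show "c l * coeff (g l) j = (if l = j then c j * coeff (g j) j else 0)"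
      using less.IH low[of l j] less.prems by (cases l j rule: linorder_cases) auto
  qed
  also have "\<dots> = c j * coeff (g j) j" using less.prems by simp
  finally show ?case using diag[OF less.prems] by simp
qed

lemma poly_poly_at_sum: "poly (poly_at_sum F) q = pcompose F (q + [:0, 1:])"
  by (induction F) (simp_all add: poly_at_sum_pCons pcompose_pCons X1_def X2_def const2_def distrib_right)

lemma coeff_0_Mpoly: "coeff (Mpoly p) 0 = poly p [:1, -1:]"
proof -
  have "poly (1 - X1 - X2) 0 = [:1, -1:]"
    by (simp add: X1_def X2_def poly_0_coeff_0 one_pCons)
  then show ?thesis by (simp add: poly_0_coeff_0[symmetric] Mpoly_def poly_pcompose)
qed

lemma degree_coeff_0_Mpoly_bpoly:
  assumes "k \<le> n"
  shows "degree (coeff (Mpoly (bpoly n k)) 0) \<le> n"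
proof -
  define q where "q = [:1, -1 :: real:]"
  have "coeff (Mpoly (bpoly n k)) 0 = [:poly (shifted_jacobi (2 * k + 1) (n - k)) 1:] * poly (legendre_hom k) q"
    by (simp add: coeff_0_Mpoly bpoly_def poly_poly_at_sum q_def one_pCons pcompose_pCons_0)
  moreover have "degree (poly (legendre_hom k) q) \<le> k"
    unfolding legendre_hom_def poly_sum
  proof (intro degree_sum_le finite_atMost)
    fix s assume "s \<in> {..k}"
    have "degree (q ^ (k - s) * [:0, 1:] ^ s) \<le> (k - s) + s"
      using degree_mult_le[of "q ^ (k - s)" "[:0, 1:] ^ s"]
        degree_power_le[of q "k - s"] degree_power_le[of "[:0::real, 1:]" s]
      by (simp add: q_def)
    moreover have "poly (const2 c * (X1 ^ (k - s) * X2 ^ s)) q = smult c (q ^ (k - s) * [:0, 1:] ^ s)" for c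
      by (simp add: const2_def X1_def X2_def poly_power)
    ultimately show "degree (poly (const2 (legendre_hom_coeff k s) * (X1 ^ (k - s) * X2 ^ s)) q) \<le> k"
      using \<open>s \<in> {..k}\<close> degree_smult_le[of _ "q ^ (k - s) * [:0, 1:] ^ s"] by simp
  qed
  moreover have "degree ([:c:] * r) \<le> degree r" for c and r :: "real poly"
    by (simp add: degree_smult_le)
  ultimately show ?thesis
    using assms by (metis le_trans)
qed

lemma eval2_0_left: "eval2 p 0 z = poly (coeff p 0) z"
  by (simp add: eval2_def poly_0_coeff_0[symmetric])

text \<open>Both \<open>M b\<^sub>n\<^sub>,\<^sub>k\<close> and the combination of the \<open>b\<^sub>n\<^sub>,\<^sub>i\<close> matching it on the edge
  \<open>x\<^sub>1 = 0\<close> are eigenpolynomials of \<open>L\<close> for the eigenvalue \<open>-n(n+2)\<close>; their difference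
  vanishes on that edge and is therefore zero.\<close>

lemma Mop_bbasis_expansion_exists:
  assumes "k \<le> n"
  shows "\<exists>c. \<forall>y z. bbasis n k (1 - y - z, z) = (\<Sum>i\<le>n. bbasis n i (y, z) * c i)"
proof -
  obtain c where c: "coeff (Mpoly (bpoly n k)) 0 = (\<Sum>i\<le>n. smult (c i) (coeff (bpoly n i) 0))"
    using triangular_polys_span[OF coeff_0_bpoly_triangular degree_coeff_0_Mpoly_bpoly[OF assms]]
    by blast
  define D where "D = Mpoly (bpoly n k) - (\<Sum>i\<le>n. const2 (c i) * bpoly n i)"
  define \<mu> :: poly2 where "\<mu> = - of_nat (n * n + 2 * n)"
  have eigen: "tri_op (bpoly n i) = \<mu> * bpoly n i" if "i \<le> n" for i
    using tri_op_bpoly[OF that] by (simp add: \<mu>_def)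
  have "tri_op (\<Sum>i\<le>n. const2 (c i) * bpoly n i) = (\<Sum>i\<le>n. \<mu> * (const2 (c i) * bpoly n i))"
    unfolding tri_op_sum tri_op_const2_mult by (intro sum.cong refl) (simp add: eigen mult.left_commute)
  moreover have "tri_op (Mpoly (bpoly n k)) = \<mu> * Mpoly (bpoly n k)"
    unfolding tri_op_Mpoly eigen[OF assms] Mpoly_mult \<mu>_def by (simp only: Mpoly_minus Mpoly_of_nat)
  ultimately have "tri_op D = \<mu> * D"
    unfolding D_def tri_op_diff by (simp only: sum_distrib_left right_diff_distrib)
  then have "tri_op D = const2 (- of_nat (n * n + 2 * n)) * D"
    by (simp add: \<mu>_def const2_def of_nat_poly)
  moreover have "coeff D 0 = 0"
    using c unfolding D_def coeff_diff coeff_sum by (simp add: coeff_mult_0 const2_def)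
  ultimately have "D = 0" by (rule tri_op_eigen_eq_0)
  then have "eval2 (Mpoly (bpoly n k)) y z = eval2 (\<Sum>i\<le>n. const2 (c i) * bpoly n i) y z" for y z
    by (simp add: D_def)
  then have "bbasis n k (1 - y - z, z) = (\<Sum>i\<le>n. bbasis n i (y, z) * c i)" for y z
    by (simp add: eval2_Mpoly eval2_bpoly eval2_sum eval2_mult mult.commute)
  then show ?thesis by blast
qed

lemma bbasis_expansion_unique:
  assumes "\<forall>y z. (\<Sum>i\<le>n. bbasis n i (y, z) * c i) = (\<Sum>i\<le>n. bbasis n i (y, z) * d i)"
    and "i \<le> n"
  shows "c i = d i"
proof -
  have "poly (\<Sum>i\<le>n. smult (c i - d i) (coeff (bpoly n i) 0)) z = 0" for z
    using assms(1)[rule_format, of 0 z]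
    by (simp add: poly_sum eval2_bpoly[symmetric] eval2_0_left sum_subtractf algebra_simps)
  then have "(\<Sum>i\<le>n. smult (c i - d i) (coeff (bpoly n i) 0)) = 0"
    using poly_all_0_iff_0 by blast
  then show ?thesis
    using triangular_polys_independent[OF coeff_0_bpoly_triangular(1,2), where c = "\<lambda>i. c i - d i"]
      assms(2) by simp
qed

lemma Mop_bbasis_expansion:
  assumes "k \<le> n"
  shows "Mop (bbasis n k) x = (\<Sum>i\<le>n. bbasis n i x * Mmat n i k)"
proof -
  obtain c where c: "\<forall>y z. bbasis n k (1 - y - z, z) = (\<Sum>i\<le>n. bbasis n i (y, z) * c i)"
    using Mop_bbasis_expansion_exists[OF assms] by blast
  define c' where "c' i = (if i \<le> n then c i else 0)" for i
  define expands where "expands d \<longleftrightarrow> (\<forall>i>n. d i = 0) \<and>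
       (\<forall>x. Mop (bbasis n k) x = (\<Sum>i\<le>n. bbasis n i x * d i))" for d
  have "expands c'"
    using c by (auto simp: expands_def c'_def Mop_def split: prod.split)
  moreover have "d = c'" if "expands d" for d
  proof
    fix i
    show "d i = c' i"
    proof (cases "i \<le> n")
      case True
      have "\<forall>y z. (\<Sum>i\<le>n. bbasis n i (y, z) * d i) = (\<Sum>i\<le>n. bbasis n i (y, z) * c' i)"
        using that \<open>expands c'\<close> by (simp add: expands_def)
      then show ?thesis using bbasis_expansion_unique True by blast
    qed (use that in \<open>simp add: expands_def c'_def\<close>)
  qed
  ultimately have "(THE d. expands d) = c'"
    by (rule the_equality)
  then have "Mmat n i k = c' i" for i
    unfolding Mmat_def expands_def[symmetric] by simp
  with \<open>expands c'\<close> show ?thesis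
    by (cases x) (simp add: expands_def)
qed

section \<open>Symmetries\<close>

lemma jacobi_hom_swap:
  "jacobi_hom 0 0 k (z - y) (z + y) = (-1) ^ k * jacobi_hom 0 0 k (y - z) (y + z)"
proof -
  have half: "(z - y - (z + y)) / 2 = - y" "(z - y + (z + y)) / 2 = z"
             "(y - z - (y + z)) / 2 = - z" "(y - z + (y + z)) / 2 = y" by simp_all
  have "jacobi_hom 0 0 k (z - y) (z + y)
      = (\<Sum>s\<le>k. real (k choose (k - s)) * real (k choose s) * (- y) ^ s * z ^ (k - s))"
    unfolding jacobi_hom_def half by simp
  also have "\<dots> = (\<Sum>s\<le>k. real (k choose s) * real (k choose (k - s)) * (- y) ^ (k - s) * z ^ s)"
    by (rule sum.reindex_bij_witness[where i = "\<lambda>s. k - s" and j = "\<lambda>s. k - s"]) auto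
  also have "\<dots> = (\<Sum>s\<le>k. (-1) ^ k * (real (k choose (k - s)) * real (k choose s) * (- z) ^ s * y ^ (k - s)))"
  proof (intro sum.cong refl)
    fix s assume "s \<in> {..k}"
    then have "(-1::real) ^ (k - s) = (-1) ^ k * (-1) ^ s"
      by (simp flip: neg_one_power_add_eq_neg_one_power_diff power_add)
    then show "real (k choose s) * real (k choose (k - s)) * (- y) ^ (k - s) * z ^ s
        = (-1) ^ k * (real (k choose (k - s)) * real (k choose s) * (- z) ^ s * y ^ (k - s))"
      by (simp add: power_minus[of y] power_minus[of z] algebra_simps)
  qed
  also have "\<dots> = (-1) ^ k * jacobi_hom 0 0 k (y - z) (y + z)"
    unfolding jacobi_hom_def half by (simp add: sum_distrib_left)
  finally show ?thesis .
qed

lemma bbasis_swap: "bbasis n k (z, y) = (-1) ^ k * bbasis n k (y, z)"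
  unfolding bbasis_def using jacobi_hom_swap[of k z y] by (simp add: add.commute)

lemma sum_even_indices:
  "(\<Sum>i\<le>n. (1 + (-1) ^ i) * f i) = 2 * (\<Sum>j | 2 * j \<le> n. f (2 * j) :: real)"
proof -
  have "(\<Sum>i\<le>n. (1 + (-1) ^ i) * f i) = (\<Sum>i\<le>n. if even i then 2 * f i else 0)"
    by (intro sum.cong refl) auto
  also have "\<dots> = (\<Sum>i\<in>{i\<in>{..n}. even i}. 2 * f i)"
    by (simp only: sum.inter_filter[OF finite_atMost])
  also have "{i\<in>{..n}. even i} = (\<lambda>j. 2 * j) ` {j. 2 * j \<le> n}"
    by (auto elim!: evenE)
  finally show ?thesis
    by (simp add: sum.reindex inj_on_def sum_distrib_left)
qed

lemma sum_odd_indices: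
  "(\<Sum>i\<le>n. (1 - (-1) ^ i) * f i) = 2 * (\<Sum>j | 2 * j + 1 \<le> n. f (2 * j + 1) :: real)"
proof -
  have "(\<Sum>i\<le>n. (1 - (-1) ^ i) * f i) = (\<Sum>i\<le>n. if odd i then 2 * f i else 0)"
    by (intro sum.cong refl) auto
  also have "\<dots> = (\<Sum>i\<in>{i\<in>{..n}. odd i}. 2 * f i)"
    by (simp only: sum.inter_filter[OF finite_atMost])
  also have "{i\<in>{..n}. odd i} = (\<lambda>j. 2 * j + 1) ` {j. 2 * j + 1 \<le> n}"
    by (auto elim!: oddE)
  finally show ?thesis
    by (simp add: sum.reindex inj_on_def sum_distrib_left)
qed

lemma Mop_bbasis_plus_swap:
  assumes "K \<le> n"
  shows "bbasis n K (1 - y - z, z) + \<epsilon> * bbasis n K (1 - z - y, y)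
     = (\<Sum>i\<le>n. (1 + \<epsilon> * (-1) ^ i) * (Mmat n i K * bbasis n i (y, z)))"
  using Mop_bbasis_expansion[OF assms, of "(y, z)"] Mop_bbasis_expansion[OF assms, of "(z, y)"]
  by (simp add: Mop_def bbasis_swap[of n _ z y] sum.distrib sum_distrib_left algebra_simps)

text \<open>A vertex \<open>v\<close> of the triangle is singled out by an affine function \<open>\<phi>\<close> vanishing at \<open>v\<close>
  and positive elsewhere on the triangle; since \<open>\<phi>\<close> composed with an affine self-bijection is
  a convex combination of its values at the images of the vertices, \<open>v\<close> must be one of them.\<close>

lemma affine_bij_Tref_vertices:
  assumes bij: "bij_betw (affine_map2 a b c d e f) Tref Tref"
  defines "V \<equiv> {(e, f), (a + e, c + f), (b + e, d + f)}"
  shows "(0, 0) \<in> V" "(1, 0) \<in> V" "(0, 1) \<in> V"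
proof -
  let ?F = "affine_map2 a b c d e f"
  have F: "?F (x1, x2) = (a * x1 + b * x2 + e, c * x1 + d * x2 + f)" for x1 x2
    by (simp add: affine_map2_def)
  have V_Tref: "(e, f) \<in> Tref" "(a + e, c + f) \<in> Tref" "(b + e, d + f) \<in> Tref"
    using bij_betw_apply[OF bij, of "(0, 0)"] bij_betw_apply[OF bij, of "(1, 0)"]
      bij_betw_apply[OF bij, of "(0, 1)"]
    by (auto simp: Tref_def F)
  have hit: "v \<in> V"
    if "v \<in> Tref" and pos: "\<And>p. p \<in> Tref \<Longrightarrow> p \<noteq> v \<Longrightarrow> \<phi> p > 0" and "\<phi> v = 0"
      and affine: "\<And>x1 x2. \<phi> (?F (x1, x2))
          = (1 - x1 - x2) * \<phi> (e, f) + x1 * \<phi> (a + e, c + f) + x2 * \<phi> (b + e, d + f)"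
    for v \<phi>
  proof (rule ccontr)
    assume "v \<notin> V"
    then have "\<phi> p > 0" if "p \<in> V" for p
      using pos V_Tref that by (auto simp: V_def)
    then have \<phi>_pos: "\<phi> (e, f) > 0" "\<phi> (a + e, c + f) > 0" "\<phi> (b + e, d + f) > 0"
      by (simp_all add: V_def)
    obtain x1 x2 where x: "(x1, x2) \<in> Tref" "?F (x1, x2) = v"
      using bij_betw_imp_surj_on[OF bij] \<open>v \<in> Tref\<close> by force
    then have "x1 \<ge> 0" "x2 \<ge> 0" "1 - x1 - x2 \<ge> 0" by (auto simp: Tref_def)
    moreover have "x1 > 0 \<or> x2 > 0 \<or> 1 - x1 - x2 > 0" by linarith
    ultimately have "(1 - x1 - x2) * \<phi> (e, f) + x1 * \<phi> (a + e, c + f) + x2 * \<phi> (b + e, d + f) > 0"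
      using \<phi>_pos by (smt (verit) mult_nonneg_nonneg mult_pos_pos)
    then show False using affine[of x1 x2] x(2) \<open>\<phi> v = 0\<close> by simp
  qed
  show "(0, 0) \<in> V"
    by (rule hit[where \<phi> = "\<lambda>p. fst p + snd p"])
       (auto simp: Tref_def F algebra_simps add_pos_nonneg add_nonneg_pos)
  show "(1, 0) \<in> V"
    by (rule hit[where \<phi> = "\<lambda>p. 1 - fst p"]) (auto simp: Tref_def F algebra_simps)
  show "(0, 1) \<in> V"
    by (rule hit[where \<phi> = "\<lambda>p. 1 - snd p"]) (auto simp: Tref_def F algebra_simps)
qed

lemma affine_bij_Tref_cases:
  assumes "bij_betw (affine_map2 a b c d e f) Tref Tref"
  shows "(a, b, c, d, e, f) \<in> {(1, 0, 0, 1, 0, 0), (0, 1, 1, 0, 0, 0), (-1, -1, 0, 1, 1, 0),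
     (-1, -1, 1, 0, 1, 0), (0, 1, -1, -1, 0, 1), (1, 0, -1, -1, 0, 1)}"
  using affine_bij_Tref_vertices[OF assms]
  apply (simp only: insert_iff empty_iff prod.inject simp_thms)
  apply (elim disjE conjE)
  apply (simp_all add: eq_diff_eq[symmetric] add.commute)
  done

lemma totally_symmetric_if_M_R_invariant:
  assumes M: "\<And>y z. u (1 - y - z, z) = u (y, z)" and R: "\<And>y z. u (z, y) = u (y, z)"
  shows "totally_symmetric u"
  unfolding totally_symmetric_def
proof (intro allI impI ballI)
  fix a b c d e f :: real and x :: "real \<times> real"
  assume "bij_betw (affine_map2 a b c d e f) Tref Tref"
  obtain x1 x2 where x: "x = (x1, x2)" by (cases x)
  have "1 - x2 - x1 = 1 - x1 - x2" by simp
  with affine_bij_Tref_cases[OF \<open>bij_betw _ Tref Tref\<close>]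
  show "u (affine_map2 a b c d e f x) = u x"
    using M[of x1 x2] R[of x1 x2] M[of x2 x1] R[of x2 "1 - x1 - x2"] R[of x1 "1 - x2 - x1"]
    by (auto simp: x affine_map2_def algebra_simps)
qed

lemma signed_orbit_sum_symmetric:
  fixes b r :: "real \<times> real \<Rightarrow> real"
  assumes swap: "\<And>y z. b (z, y) = \<epsilon> * b (y, z)" and sign: "\<epsilon> * \<epsilon> = 1"
    and r: "\<And>y z. r (y, z) = b (y, z) + \<epsilon> * b (1 - y - z, z) + b (1 - z - y, y)"
  shows "r (1 - y - z, z) = \<epsilon> * r (y, z)" and "r (z, y) = \<epsilon> * r (y, z)"
proof -
  have "r (1 - y - z, z) = b (1 - y - z, z) + \<epsilon> * b (y, z) + \<epsilon> * b (1 - z - y, y)"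
    using swap[where y = "1 - y - z" and z = y] by (simp add: r add.commute diff_diff_eq)
  also have "\<dots> = \<epsilon> * r (y, z)"
    unfolding r by (simp add: distrib_left mult.assoc[symmetric] sign)
  finally show "r (1 - y - z, z) = \<epsilon> * r (y, z)" .
  show "r (z, y) = \<epsilon> * r (y, z)"
    unfolding r swap[where y = y and z = z] distrib_left mult.assoc[symmetric] sign
    by (simp add: algebra_simps)
qed

lemma even_sum_eq_orbit_sum:
  assumes "K \<le> n"
  shows "2 * (\<Sum>j | 2 * j \<le> n. Mmat n (2 * j) K * bbasis n (2 * j) (y, z)) + bbasis n K (y, z)
     = bbasis n K (y, z) + 1 * bbasis n K (1 - y - z, z) + bbasis n K (1 - z - y, y)"
  using Mop_bbasis_plus_swap[OF assms, of y z 1] sum_even_indices by simp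

lemma odd_sum_eq_orbit_sum:
  assumes "K \<le> n"
  shows "- 2 * (\<Sum>j | 2 * j + 1 \<le> n. Mmat n (2 * j + 1) K * bbasis n (2 * j + 1) (y, z))
       + bbasis n K (y, z)
     = bbasis n K (y, z) + (- 1) * bbasis n K (1 - y - z, z) + bbasis n K (1 - z - y, y)"
  using Mop_bbasis_plus_swap[OF assms, of y z "- 1"] sum_odd_indices by simp

theorem corollary17:
  fixes n :: nat
  shows "(\<forall>k. 2 * k \<le> n \<longrightarrow>
            totally_symmetric (\<lambda>x. 2 * (\<Sum>j | 2 * j \<le> n. Mmat n (2 * j) (2 * k) * bbasis n (2 * j) x)
                                    + bbasis n (2 * k) x))
       \<and> (\<forall>k. 2 * k + 1 \<le> n \<longrightarrow>
            (let r = (\<lambda>x. - 2 * (\<Sum>j | 2 * j + 1 \<le> n.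
                                   Mmat n (2 * j + 1) (2 * k + 1) * bbasis n (2 * j + 1) x)
                         + bbasis n (2 * k + 1) x)
             in Mop r = (\<lambda>x. - r x) \<and> Rop r = (\<lambda>x. - r x)))"
proof (intro conjI allI impI)
  fix k assume "2 * k \<le> n"
  let ?r = "\<lambda>x. 2 * (\<Sum>j | 2 * j \<le> n. Mmat n (2 * j) (2 * k) * bbasis n (2 * j) x) + bbasis n (2 * k) x"
  have swap: "bbasis n (2 * k) (z, y) = 1 * bbasis n (2 * k) (y, z)" for y z
    by (simp add: bbasis_swap[of n "2 * k" z y])
  note symmetric = signed_orbit_sum_symmetric[where r = ?r,
      OF swap _ even_sum_eq_orbit_sum[OF \<open>2 * k \<le> n\<close>]]
  show "totally_symmetric ?r"
  proof (rule totally_symmetric_if_M_R_invariant)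
    fix y z
    show "?r (1 - y - z, z) = ?r (y, z)" "?r (z, y) = ?r (y, z)"
      using symmetric[where y = y and z = z] by simp_all
  qed
next
  fix k assume "2 * k + 1 \<le> n"
  define r where "r x = - 2 * (\<Sum>j | 2 * j + 1 \<le> n.
      Mmat n (2 * j + 1) (2 * k + 1) * bbasis n (2 * j + 1) x) + bbasis n (2 * k + 1) x" for x
  have swap: "bbasis n (2 * k + 1) (z, y) = - 1 * bbasis n (2 * k + 1) (y, z)" for y z
    using bbasis_swap[of n "2 * k + 1" z y] by simp
  note antisymmetric = signed_orbit_sum_symmetric[where r = r,
      OF swap _ odd_sum_eq_orbit_sum[OF \<open>2 * k + 1 \<le> n\<close>, folded r_def]]
  have "Mop r (y, z) = - r (y, z)" "Rop r (y, z) = - r (y, z)" for y z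
    using antisymmetric[where y = y and z = z] by (simp_all add: Mop_def Rop_def)
  then have "Mop r = (\<lambda>x. - r x)" "Rop r = (\<lambda>x. - r x)"
    by (simp_all add: fun_eq_iff)
  then show "let r = (\<lambda>x. - 2 * (\<Sum>j | 2 * j + 1 \<le> n.
                                   Mmat n (2 * j + 1) (2 * k + 1) * bbasis n (2 * j + 1) x)
                         + bbasis n (2 * k + 1) x)
             in Mop r = (\<lambda>x. - r x) \<and> Rop r = (\<lambda>x. - r x)"
    unfolding r_def Let_def by simp
qed

end
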